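(* Let $((\Omega,\mathcal{A}),(\Omega,\mathcal{M}),t)$ be a single player type space and let $P \in \mathrm{pba}(\Omega,\mathcal{A})$ be arbitrary. Then exactly one of the following holds: (1) $P$ is $(\mathcal{M},t)$-disintegrable, i.e. $P(E\cap F)=\int_F t(\cdot,E)\,dP$ for every $E\in\mathcal{A}$ and $F\in\mathcal{M}$; (2) $P$ is a money pump, i.e. there exists $f\in B(\Omega,\mathcal{A})$ with $\int f\,dt(\omega,\cdot)\ge 0$ for all $\omega\in\Omega$ and $\int f\,dP<0$.
   Context: A field on a set $X$ is a collection of subsets of $X$ containing $X$ and closed under complements and finite intersections. For a field $\mathcal{A}$ on $\Omega$, $\mathrm{pba}(\Omega,\mathcal{A})$ denotes the set of finitely additive, nonnegative $P:\mathcal{A}\to\mathbb{R}$ with $P(\Omega)=1$ (probability charges), and $B(\Omega,\mathcal{A})$ denotes the closure in the supremum norm of the linear span of indicator functions of sets in $\mathcal{A}$; such functions have a well-defined integral against every probability charge. A single player type space $((\Omega,\mathcal{A}),(\Omega,\mathcal{M}),t)$ consists of a set $\Omega$, fields $\mathcal{M}\subseteq\mathcal{A}$ on $\Omega$, and a function $t:\Omega\times\mathcal{A}\to[0,1]$ such that (1) $t(\omega,\cdot)\in\mathrm{pba}(\Omega,\mathcal{A})$ for every $\omega$; (2) $t(\cdot,E)\in B(\Omega,\mathcal{M})$ for every $E\in\mathcal{A}$; (3) $t(\omega,E)=1$ whenever $E\in\mathcal{M}$ and $\omega\in E$. *)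

theory Defs
  imports Complex_Main "HOL-Library.Indicator_Function"
begin

definition field_on :: "'a set \<Rightarrow> 'a set set \<Rightarrow> bool" where
  "field_on X A \<longleftrightarrow> A \<subseteq> Pow X \<and> X \<in> A \<and> (\<forall>E\<in>A. X - E \<in> A)
     \<and> (\<forall>E\<in>A. \<forall>F\<in>A. E \<inter> F \<in> A)"

definition pba :: "'a set \<Rightarrow> 'a set set \<Rightarrow> ('a set \<Rightarrow> real) \<Rightarrow> bool" where
  "pba \<Omega> A P \<longleftrightarrow> (\<forall>E\<in>A. P E \<ge> 0) \<and> P \<Omega> = 1
     \<and> (\<forall>E\<in>A. \<forall>F\<in>A. E \<inter> F = {} \<longrightarrow> P (E \<union> F) = P E + P F)"

definition simple_fn :: "'a set \<Rightarrow> 'a set set \<Rightarrow> ('a \<Rightarrow> real) \<Rightarrow> bool" where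
  "simple_fn \<Omega> A g \<longleftrightarrow> (\<exists>(n::nat) (c::nat \<Rightarrow> real) (E::nat \<Rightarrow> 'a set).
      (\<forall>i<n. E i \<in> A) \<and> (\<forall>\<omega>\<in>\<Omega>. g \<omega> = (\<Sum>i<n. c i * indicator (E i) \<omega>)))"

text \<open>B(\<Omega>,A): closure of the span of indicators in the supremum norm on \<Omega>.\<close>
definition in_B :: "'a set \<Rightarrow> 'a set set \<Rightarrow> ('a \<Rightarrow> real) \<Rightarrow> bool" where
  "in_B \<Omega> A f \<longleftrightarrow> (\<forall>e>0. \<exists>g. simple_fn \<Omega> A g \<and> (\<forall>\<omega>\<in>\<Omega>. \<bar>f \<omega> - g \<omega>\<bar> \<le> e))"

definition simple_integral :: "'a set \<Rightarrow> ('a set \<Rightarrow> real) \<Rightarrow> ('a \<Rightarrow> real) \<Rightarrow> real" where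
  "simple_integral \<Omega> P g = (\<Sum>y\<in>g ` \<Omega>. y * P {\<omega>\<in>\<Omega>. g \<omega> = y})"

definition charge_integral :: "'a set \<Rightarrow> 'a set set \<Rightarrow> ('a set \<Rightarrow> real) \<Rightarrow> ('a \<Rightarrow> real) \<Rightarrow> real" where
  "charge_integral \<Omega> A P f = (THE r. \<forall>e>0. \<exists>g. simple_fn \<Omega> A g
      \<and> (\<forall>\<omega>\<in>\<Omega>. \<bar>f \<omega> - g \<omega>\<bar> \<le> e) \<and> \<bar>r - simple_integral \<Omega> P g\<bar> \<le> e)"

definition type_space :: "'a set \<Rightarrow> 'a set set \<Rightarrow> 'a set set \<Rightarrow> ('a \<Rightarrow> 'a set \<Rightarrow> real) \<Rightarrow> bool" where
  "type_space \<Omega> A M t \<longleftrightarrow> field_on \<Omega> A \<and> field_on \<Omega> M \<and> M \<subseteq> A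
     \<and> (\<forall>\<omega>\<in>\<Omega>. pba \<Omega> A (t \<omega>))
     \<and> (\<forall>E\<in>A. in_B \<Omega> M (\<lambda>\<omega>. t \<omega> E))
     \<and> (\<forall>E\<in>M. \<forall>\<omega>\<in>E. t \<omega> E = 1)"

definition disintegrable :: "'a set \<Rightarrow> 'a set set \<Rightarrow> 'a set set \<Rightarrow> ('a \<Rightarrow> 'a set \<Rightarrow> real) \<Rightarrow> ('a set \<Rightarrow> real) \<Rightarrow> bool" where
  "disintegrable \<Omega> A M t P \<longleftrightarrow> (\<forall>E\<in>A. \<forall>F\<in>M.
      P (E \<inter> F) = charge_integral \<Omega> A P (\<lambda>\<omega>. indicator F \<omega> * t \<omega> E))"

definition money_pump :: "'a set \<Rightarrow> 'a set set \<Rightarrow> ('a \<Rightarrow> 'a set \<Rightarrow> real) \<Rightarrow> ('a set \<Rightarrow> real) \<Rightarrow> bool" where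
  "money_pump \<Omega> A t P \<longleftrightarrow> (\<exists>f. in_B \<Omega> A f
      \<and> (\<forall>\<omega>\<in>\<Omega>. charge_integral \<Omega> A (t \<omega>) f \<ge> 0)
      \<and> charge_integral \<Omega> A P f < 0)"

end

theory Submission
  imports Defs
begin

text \<open>Disintegrability of P gives \<open>\<integral> t(\<cdot>,E) dP = P(E)\<close>, hence
  \<open>\<integral> f dP = \<integral> (\<integral> f dt(\<omega>,\<cdot>)) dP\<close> first for simple f and then, by uniform approximation, for all
  \<open>f \<in> B(\<Omega>,\<A>)\<close>; so a gamble acceptable under every \<open>t(\<omega>,\<cdot>)\<close> cannot lose money under P.
  Conversely, \<open>t(\<omega>,F) = 1\<^sub>F(\<omega>)\<close> for \<open>F \<in> \<M>\<close>, so integrating any \<open>h \<in> B(\<Omega>,\<M>)\<close> against \<open>t(\<omega>,\<cdot>)\<close>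
  returns \<open>h(\<omega>)\<close>. Hence \<open>f = 1\<^bsub>E \<inter> F\<^esub> - 1\<^sub>F t(\<cdot>,E)\<close> integrates to 0 under every \<open>t(\<omega>,\<cdot>)\<close>;
  if P is no money pump, both f and \<open>-f\<close> have nonnegative P-integral, so \<open>\<integral> f dP = 0\<close>, which is
  the disintegration identity.\<close>

lemma eq_if_abs_diff_le_mult_epsilon:
  fixes x y K :: real
  assumes K: "0 \<le> K" and le: "\<And>d. 0 < d \<Longrightarrow> \<bar>x - y\<bar> \<le> K * d"
  shows "x = y"
proof -
  have "\<bar>x - y\<bar> \<le> 0 + e" if e: "0 < e" for e
  proof -
    have "\<bar>x - y\<bar> \<le> K * (e / (K + 1))" using le[of "e / (K + 1)"] e K by simp
    also have "\<dots> \<le> e" using e K by (simp add: field_simps)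
    finally show ?thesis by simp
  qed
  then have "\<bar>x - y\<bar> \<le> 0" by (rule field_le_epsilon)
  then show ?thesis by simp
qed

lemma abs_lin_comb_le:
  fixes a b x y d :: real
  assumes "\<bar>x\<bar> \<le> d" "\<bar>y\<bar> \<le> d"
  shows "\<bar>a * x + b * y\<bar> \<le> (\<bar>a\<bar> + \<bar>b\<bar>) * d"
proof -
  have "\<bar>a * x + b * y\<bar> \<le> \<bar>a\<bar> * \<bar>x\<bar> + \<bar>b\<bar> * \<bar>y\<bar>"
    using abs_triangle_ineq[of "a * x" "b * y"] by (simp add: abs_mult)
  also have "\<dots> \<le> \<bar>a\<bar> * d + \<bar>b\<bar> * d" using assms by (intro add_mono mult_left_mono) auto
  finally show ?thesis by (simp add: distrib_right)
qed

subsection \<open>Fields of sets\<close>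

lemma field_on_subset: "field_on \<Omega> A \<Longrightarrow> E \<in> A \<Longrightarrow> E \<subseteq> \<Omega>"
  unfolding field_on_def by auto

lemma field_on_space: "field_on \<Omega> A \<Longrightarrow> \<Omega> \<in> A"
  unfolding field_on_def by auto

lemma field_on_compl: "field_on \<Omega> A \<Longrightarrow> E \<in> A \<Longrightarrow> \<Omega> - E \<in> A"
  unfolding field_on_def by auto

lemma field_on_Int: "field_on \<Omega> A \<Longrightarrow> E \<in> A \<Longrightarrow> F \<in> A \<Longrightarrow> E \<inter> F \<in> A"
  unfolding field_on_def by auto

lemma field_on_empty: "field_on \<Omega> A \<Longrightarrow> {} \<in> A"
  using field_on_compl[of \<Omega> A \<Omega>] field_on_space[of \<Omega> A] by simp

lemma field_on_Diff:
  assumes "field_on \<Omega> A" "E \<in> A" "F \<in> A"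
  shows "E - F \<in> A"
proof -
  have "E - F = E \<inter> (\<Omega> - F)" using field_on_subset[OF assms(1,2)] by auto
  then show ?thesis using assms by (simp add: field_on_compl field_on_Int)
qed

lemma field_on_Un:
  assumes "field_on \<Omega> A" "E \<in> A" "F \<in> A"
  shows "E \<union> F \<in> A"
proof -
  have "E \<union> F = \<Omega> - ((\<Omega> - E) \<inter> (\<Omega> - F))"
    using field_on_subset[OF assms(1,2)] field_on_subset[OF assms(1,3)] by auto
  then show ?thesis using assms by (simp add: field_on_compl field_on_Int)
qed

lemma field_on_UN:
  assumes "field_on \<Omega> A" "finite J" "B ` J \<subseteq> A"
  shows "(\<Union>j\<in>J. B j) \<in> A"
  using assms(2,3) by (induction J rule: finite_induct) (auto intro: field_on_Un field_on_empty assms(1))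

text \<open>The atoms of the field generated by \<open>E 0, \<dots>, E (n - 1)\<close>, indexed by the set of generators
  containing them.\<close>

definition atom :: "'a set \<Rightarrow> nat \<Rightarrow> (nat \<Rightarrow> 'a set) \<Rightarrow> nat set \<Rightarrow> 'a set" where
  "atom \<Omega> n E S = {\<omega>\<in>\<Omega>. \<forall>i<n. \<omega> \<in> E i \<longleftrightarrow> i \<in> S}"

lemma atom_in_field:
  assumes A: "field_on \<Omega> A" and E: "\<forall>i<n. E i \<in> A"
  shows "atom \<Omega> n E S \<in> A"
  using E
proof (induction n)
  case 0
  then show ?case using field_on_space[OF A] by (simp add: atom_def)
next
  case (Suc n)
  have "atom \<Omega> (Suc n) E S = atom \<Omega> n E S \<inter> (if n \<in> S then E n else \<Omega> - E n)"
    using field_on_subset[OF A, of "E n"] Suc.prems by (auto simp: atom_def less_Suc_eq)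
  then show ?case using Suc A by (auto intro!: field_on_Int field_on_compl)
qed

lemma disjoint_family_on_atom: "disjoint_family_on (atom \<Omega> n E) (Pow {..<n})"
  unfolding disjoint_family_on_def
proof (intro ballI impI)
  fix S T assume "S \<in> Pow {..<n}" "T \<in> Pow {..<n}" "S \<noteq> T"
  then have "(S - T) \<union> (T - S) \<noteq> {}" "(S - T) \<union> (T - S) \<subseteq> {..<n}" by auto
  then obtain i where "i < n" "i \<in> (S - T) \<union> (T - S)" by auto
  then show "atom \<Omega> n E S \<inter> atom \<Omega> n E T = {}" by (auto simp: atom_def)
qed

lemma mem_atom_self: "\<omega> \<in> \<Omega> \<Longrightarrow> \<omega> \<in> atom \<Omega> n E {i. i < n \<and> \<omega> \<in> E i}"
  by (simp add: atom_def)

lemma UN_atom: "(\<Union>S\<in>Pow {..<n}. atom \<Omega> n E S) = \<Omega>"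
proof
  show "\<Omega> \<subseteq> (\<Union>S\<in>Pow {..<n}. atom \<Omega> n E S)"
  proof
    fix \<omega> assume \<omega>: "\<omega> \<in> \<Omega>"
    have "{i. i < n \<and> \<omega> \<in> E i} \<in> Pow {..<n}" by auto
    from UN_I[where B = "atom \<Omega> n E", OF this mem_atom_self[OF \<omega>, of n E]]
    show "\<omega> \<in> (\<Union>S\<in>Pow {..<n}. atom \<Omega> n E S)" .
  qed
  show "(\<Union>S\<in>Pow {..<n}. atom \<Omega> n E S) \<subseteq> \<Omega>" by (auto simp: atom_def)
qed

lemma UN_atom_containing:
  assumes "i < n" "E i \<subseteq> \<Omega>"
  shows "(\<Union>S\<in>{S\<in>Pow {..<n}. i \<in> S}. atom \<Omega> n E S) = E i"
proof
  show "E i \<subseteq> (\<Union>S\<in>{S\<in>Pow {..<n}. i \<in> S}. atom \<Omega> n E S)"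
  proof
    fix \<omega> assume "\<omega> \<in> E i"
    then have S: "{j. j < n \<and> \<omega> \<in> E j} \<in> {S\<in>Pow {..<n}. i \<in> S}" and \<omega>: "\<omega> \<in> \<Omega>"
      using assms by auto
    from UN_I[where B = "atom \<Omega> n E", OF S mem_atom_self[OF \<omega>, of n E]]
    show "\<omega> \<in> (\<Union>S\<in>{S\<in>Pow {..<n}. i \<in> S}. atom \<Omega> n E S)" .
  qed
  show "(\<Union>S\<in>{S\<in>Pow {..<n}. i \<in> S}. atom \<Omega> n E S) \<subseteq> E i" using assms(1) by (auto simp: atom_def)
qed

lemma sum_indicator_on_atom:
  fixes c :: "nat \<Rightarrow> real"
  assumes "\<omega> \<in> atom \<Omega> n E S" "S \<subseteq> {..<n}"
  shows "(\<Sum>i<n. c i * indicator (E i) \<omega>) = sum c S"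
proof -
  have "(\<Sum>i<n. c i * indicator (E i) \<omega>) = (\<Sum>i<n. if i \<in> S then c i else 0)"
    using assms(1) by (intro sum.cong) (auto simp: atom_def indicator_def)
  also have "\<dots> = sum c ({..<n} \<inter> S)"
    by (rule sum.inter_restrict[symmetric]) simp
  also have "\<dots> = sum c S"
    using assms(2) by (simp add: Int_absorb1)
  finally show ?thesis .
qed

subsection \<open>Simple functions\<close>

lemma simple_fn_mono: "simple_fn \<Omega> M g \<Longrightarrow> M \<subseteq> A \<Longrightarrow> simple_fn \<Omega> A g"
  unfolding simple_fn_def by blast

lemma simple_fn_const: "field_on \<Omega> A \<Longrightarrow> simple_fn \<Omega> A (\<lambda>\<omega>. k)"
  unfolding simple_fn_def
  by (intro exI[of _ 1] exI[of _ "\<lambda>_. k"] exI[of _ "\<lambda>_. \<Omega>"]) (auto simp: field_on_space)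

lemma simple_fn_indicator: "E \<in> A \<Longrightarrow> simple_fn \<Omega> A (indicator E)"
  unfolding simple_fn_def
  by (intro exI[of _ 1] exI[of _ "\<lambda>_. 1"] exI[of _ "\<lambda>_. E"]) auto

lemma simple_fn_indicator_mult:
  assumes M: "field_on \<Omega> M" and F: "F \<in> M" and s: "simple_fn \<Omega> M s"
  shows "simple_fn \<Omega> M (\<lambda>\<omega>. indicator F \<omega> * s \<omega>)"
proof -
  obtain n c E where E: "\<forall>i<(n::nat). E i \<in> M" and s_eq: "\<forall>\<omega>\<in>\<Omega>. s \<omega> = (\<Sum>i<n. c i * indicator (E i) \<omega>)"
    using s unfolding simple_fn_def by blast
  have "\<forall>i<n. F \<inter> E i \<in> M" using E F field_on_Int[OF M] by auto
  moreover have "\<forall>\<omega>\<in>\<Omega>. indicator F \<omega> * s \<omega> = (\<Sum>i<n. c i * indicator (F \<inter> E i) \<omega>)"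
    using s_eq by (auto simp: sum_distrib_left indicator_inter_arith algebra_simps)
  ultimately show ?thesis
    unfolding simple_fn_def by (intro exI[of _ n] exI[of _ c] exI[of _ "\<lambda>i. F \<inter> E i"]) simp
qed

lemma sum_indicator_lin_comb:
  fixes a b :: real and c1 c2 :: "nat \<Rightarrow> real"
  assumes "\<forall>i<n1. E1 i \<in> A" "\<forall>\<omega>\<in>\<Omega>. g \<omega> = (\<Sum>i<n1. c1 i * indicator (E1 i) \<omega>)"
    and "\<forall>i<n2. E2 i \<in> A" "\<forall>\<omega>\<in>\<Omega>. h \<omega> = (\<Sum>i<n2. c2 i * indicator (E2 i) \<omega>)"
  obtains c E where "\<forall>i<n1 + n2. E i \<in> A"
    and "\<forall>\<omega>\<in>\<Omega>. a * g \<omega> + b * h \<omega> = (\<Sum>i<n1 + n2. c i * indicator (E i) \<omega>)"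
    and "\<And>Q. (\<Sum>i<n1 + n2. c i * Q (E i)) = a * (\<Sum>i<n1. c1 i * Q (E1 i)) + b * (\<Sum>i<n2. c2 i * Q (E2 i))"
proof -
  define c where "c i = (if i < n1 then a * c1 i else b * c2 (i - n1))" for i
  define E where "E i = (if i < n1 then E1 i else E2 (i - n1))" for i
  have split: "(\<Sum>i<n1 + n2. F i) = (\<Sum>i<n1. F i) + (\<Sum>i<n2. F (n1 + i))" for F :: "nat \<Rightarrow> real"
    by (induction n2) (auto simp: add.assoc)
  show ?thesis
  proof
    show "\<forall>i<n1 + n2. E i \<in> A" using assms(1,3) by (auto simp: E_def)
    show "\<forall>\<omega>\<in>\<Omega>. a * g \<omega> + b * h \<omega> = (\<Sum>i<n1 + n2. c i * indicator (E i) \<omega>)"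
      unfolding split using assms(2,4) by (auto simp: c_def E_def sum_distrib_left mult.assoc)
    show "(\<Sum>i<n1 + n2. c i * Q (E i)) = a * (\<Sum>i<n1. c1 i * Q (E1 i)) + b * (\<Sum>i<n2. c2 i * Q (E2 i))" for Q
      unfolding split by (simp add: c_def E_def sum_distrib_left mult.assoc)
  qed
qed

lemma simple_fn_lin:
  assumes "simple_fn \<Omega> A g" "simple_fn \<Omega> A h"
  shows "simple_fn \<Omega> A (\<lambda>\<omega>. a * g \<omega> + b * h \<omega>)"
proof -
  obtain n1 c1 E1 where 1: "\<forall>i<(n1::nat). E1 i \<in> A" "\<forall>\<omega>\<in>\<Omega>. g \<omega> = (\<Sum>i<n1. c1 i * indicator (E1 i) \<omega>)"
    using assms(1) unfolding simple_fn_def by blast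
  obtain n2 c2 E2 where 2: "\<forall>i<(n2::nat). E2 i \<in> A" "\<forall>\<omega>\<in>\<Omega>. h \<omega> = (\<Sum>i<n2. c2 i * indicator (E2 i) \<omega>)"
    using assms(2) unfolding simple_fn_def by blast
  obtain c E where "\<forall>i<n1 + n2. E i \<in> A"
    "\<forall>\<omega>\<in>\<Omega>. a * g \<omega> + b * h \<omega> = (\<Sum>i<n1 + n2. c i * indicator (E i) \<omega>)"
    by (rule sum_indicator_lin_comb[OF 1 2, where a = a and b = b])
  then show ?thesis unfolding simple_fn_def by blast
qed

lemma in_B_simple: "simple_fn \<Omega> A g \<Longrightarrow> in_B \<Omega> A g"
  unfolding in_B_def by fastforce

lemma in_B_mono: "in_B \<Omega> M f \<Longrightarrow> M \<subseteq> A \<Longrightarrow> in_B \<Omega> A f"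
  unfolding in_B_def using simple_fn_mono by blast

lemma in_B_if_approx_mult:
  fixes K :: real
  assumes K: "0 \<le> K"
    and approx: "\<And>d. 0 < d \<Longrightarrow> \<exists>g. simple_fn \<Omega> A g \<and> (\<forall>\<omega>\<in>\<Omega>. \<bar>f \<omega> - g \<omega>\<bar> \<le> K * d)"
  shows "in_B \<Omega> A f"
  unfolding in_B_def
proof (intro allI impI)
  fix e :: real assume e: "0 < e"
  then obtain g where g: "simple_fn \<Omega> A g" "\<forall>\<omega>\<in>\<Omega>. \<bar>f \<omega> - g \<omega>\<bar> \<le> K * (e / (K + 1))"
    using approx[of "e / (K + 1)"] K by auto
  have "K * (e / (K + 1)) \<le> e" using e K by (simp add: field_simps)
  then show "\<exists>g. simple_fn \<Omega> A g \<and> (\<forall>\<omega>\<in>\<Omega>. \<bar>f \<omega> - g \<omega>\<bar> \<le> e)"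
    using g by force
qed

lemma in_B_lin:
  assumes f1: "in_B \<Omega> A f1" and f2: "in_B \<Omega> A f2"
  shows "in_B \<Omega> A (\<lambda>\<omega>. a * f1 \<omega> + b * f2 \<omega>)"
proof (rule in_B_if_approx_mult)
  fix d :: real assume "0 < d"
  then obtain g1 g2 where g: "simple_fn \<Omega> A g1" "\<forall>\<omega>\<in>\<Omega>. \<bar>f1 \<omega> - g1 \<omega>\<bar> \<le> d"
    "simple_fn \<Omega> A g2" "\<forall>\<omega>\<in>\<Omega>. \<bar>f2 \<omega> - g2 \<omega>\<bar> \<le> d"
    using f1 f2 unfolding in_B_def by meson
  have "\<bar>(a * f1 \<omega> + b * f2 \<omega>) - (a * g1 \<omega> + b * g2 \<omega>)\<bar> \<le> (\<bar>a\<bar> + \<bar>b\<bar>) * d" if "\<omega> \<in> \<Omega>" for \<omega>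
    using abs_lin_comb_le[of "f1 \<omega> - g1 \<omega>" d "f2 \<omega> - g2 \<omega>" a b] g(2,4) that
    by (simp add: algebra_simps)
  then show "\<exists>g. simple_fn \<Omega> A g \<and> (\<forall>\<omega>\<in>\<Omega>. \<bar>a * f1 \<omega> + b * f2 \<omega> - g \<omega>\<bar> \<le> (\<bar>a\<bar> + \<bar>b\<bar>) * d)"
    using simple_fn_lin[OF g(1,3)] by blast
qed simp

lemma in_B_uminus: "in_B \<Omega> A f \<Longrightarrow> in_B \<Omega> A (\<lambda>\<omega>. - f \<omega>)"
  using in_B_lin[of \<Omega> A f f "-1" 0] by simp

lemma in_B_sum:
  fixes n :: nat
  assumes "\<forall>i<n. in_B \<Omega> A (f i)"
  shows "in_B \<Omega> A (\<lambda>\<omega>. \<Sum>i<n. c i * f i \<omega>)"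
  using assms
proof (induction n)
  case 0
  have "simple_fn \<Omega> A (\<lambda>\<omega>. 0)" unfolding simple_fn_def by (intro exI[of _ "0::nat"]) simp
  then show ?case by (simp add: in_B_simple)
next
  case (Suc n)
  then show ?case using in_B_lin[of \<Omega> A "\<lambda>\<omega>. \<Sum>i<n. c i * f i \<omega>" "f n" 1 "c n"] by simp
qed

lemma in_B_indicator_mult:
  assumes M: "field_on \<Omega> M" and F: "F \<in> M" and f: "in_B \<Omega> M f"
  shows "in_B \<Omega> M (\<lambda>\<omega>. indicator F \<omega> * f \<omega>)"
  unfolding in_B_def
proof (intro allI impI)
  fix e :: real assume "0 < e"
  then obtain g where g: "simple_fn \<Omega> M g" "\<forall>\<omega>\<in>\<Omega>. \<bar>f \<omega> - g \<omega>\<bar> \<le> e"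
    using f unfolding in_B_def by blast
  have "\<forall>\<omega>\<in>\<Omega>. \<bar>indicator F \<omega> * f \<omega> - indicator F \<omega> * g \<omega>\<bar> \<le> e"
    using g(2) \<open>0 < e\<close> by (auto simp: indicator_def)
  then show "\<exists>g. simple_fn \<Omega> M g \<and> (\<forall>\<omega>\<in>\<Omega>. \<bar>indicator F \<omega> * f \<omega> - g \<omega>\<bar> \<le> e)"
    using simple_fn_indicator_mult[OF M F g(1)] by blast
qed

subsection \<open>Integration against a probability charge\<close>

locale charge =
  fixes \<Omega> :: "'a set" and A :: "'a set set" and P :: "'a set \<Rightarrow> real"
  assumes field: "field_on \<Omega> A" and pba: "pba \<Omega> A P"
begin

lemma nonneg: "E \<in> A \<Longrightarrow> 0 \<le> P E"
  using pba unfolding pba_def by auto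

lemma additive: "E \<in> A \<Longrightarrow> F \<in> A \<Longrightarrow> E \<inter> F = {} \<Longrightarrow> P (E \<union> F) = P E + P F"
  using pba unfolding pba_def by auto

lemma space: "P \<Omega> = 1"
  using pba unfolding pba_def by auto

lemma empty_zero: "P {} = 0"
  using additive[of "{}" "{}"] field_on_empty[OF field] by simp

lemma mono:
  assumes "E \<in> A" "F \<in> A" "E \<subseteq> F"
  shows "P E \<le> P F"
proof -
  have "F = E \<union> (F - E)" using assms(3) by auto
  then have "P F = P E + P (F - E)"
    using additive[of E "F - E"] assms field_on_Diff[OF field] by auto
  then show ?thesis using nonneg[OF field_on_Diff[OF field assms(2,1)]] by simp
qed

lemma finite_additive:
  assumes "finite J" "B ` J \<subseteq> A" "disjoint_family_on B J"
  shows "P (\<Union>j\<in>J. B j) = (\<Sum>j\<in>J. P (B j))"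
  using assms
proof (induction J rule: finite_induct)
  case empty
  then show ?case using empty_zero by simp
next
  case (insert x J)
  have "B x \<inter> (\<Union>j\<in>J. B j) = {}"
    using insert.prems(2) insert.hyps(2) unfolding disjoint_family_on_def by auto
  moreover have "(\<Union>j\<in>J. B j) \<in> A" using field_on_UN[OF field insert.hyps(1)] insert.prems(1) by auto
  moreover have "disjoint_family_on B J"
    using insert.prems(2) by (rule disjoint_family_on_mono[rotated]) auto
  ultimately show ?case using insert additive[of "B x" "\<Union>j\<in>J. B j"] by simp
qed

lemma simple_integral_partition:
  assumes J: "finite J" and B: "B ` J \<subseteq> A" "disjoint_family_on B J" "(\<Union>j\<in>J. B j) = \<Omega>"
    and g: "\<forall>j\<in>J. \<forall>\<omega>\<in>B j. g \<omega> = v j"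
  shows "simple_integral \<Omega> P g = (\<Sum>j\<in>J. v j * P (B j))"
proof -
  define L where "L y = {\<omega>\<in>\<Omega>. g \<omega> = y}" for y
  have PL: "P (L y) = (\<Sum>j\<in>{j\<in>J. v j = y}. P (B j))" for y
  proof -
    have "L y = (\<Union>j\<in>{j\<in>J. v j = y}. B j)" unfolding L_def using B(3) g by auto
    then show ?thesis
      using finite_additive[of "{j\<in>J. v j = y}" B] J B(1,2) by (auto intro: disjoint_family_on_mono)
  qed
  have "simple_integral \<Omega> P g = (\<Sum>y\<in>g ` \<Omega>. y * P (L y))"
    unfolding simple_integral_def L_def by simp
  also have "\<dots> = (\<Sum>y\<in>v ` J. y * P (L y))"
  proof (rule sum.mono_neutral_left)
    show "g ` \<Omega> \<subseteq> v ` J" using B(3) g by auto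
    have "L y = {}" if "y \<notin> g ` \<Omega>" for y
      using that unfolding L_def by (auto intro: rev_image_eqI)
    then show "\<forall>y\<in>v ` J - g ` \<Omega>. y * P (L y) = 0" using empty_zero by simp
  qed (use J in simp)
  also have "\<dots> = (\<Sum>y\<in>v ` J. \<Sum>j\<in>{j\<in>J. v j = y}. v j * P (B j))"
    unfolding PL sum_distrib_left by (auto intro!: sum.cong)
  also have "\<dots> = (\<Sum>j\<in>J. v j * P (B j))"
    using sum.image_gen[OF J, of "\<lambda>j. v j * P (B j)" v] by simp
  finally show ?thesis .
qed

lemma simple_integral_atoms:
  assumes E: "\<forall>i<n. E i \<in> A" and g: "\<forall>\<omega>\<in>\<Omega>. g \<omega> = (\<Sum>i<n. c i * indicator (E i) \<omega>)"
  shows "simple_integral \<Omega> P g = (\<Sum>S\<in>Pow {..<n}. sum c S * P (atom \<Omega> n E S))"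
proof (rule simple_integral_partition)
  show "atom \<Omega> n E ` Pow {..<n} \<subseteq> A" using atom_in_field[OF field E] by auto
  show "\<forall>S\<in>Pow {..<n}. \<forall>\<omega>\<in>atom \<Omega> n E S. g \<omega> = sum c S"
  proof (intro ballI)
    fix S \<omega> assume "S \<in> Pow {..<n}" "\<omega> \<in> atom \<Omega> n E S"
    then show "g \<omega> = sum c S" using g sum_indicator_on_atom[of \<omega> \<Omega> n E S c] by (simp add: atom_def)
  qed
qed (simp_all add: disjoint_family_on_atom UN_atom)

lemma simple_integral_sum_indicator:
  fixes n :: nat
  assumes E: "\<forall>i<n. E i \<in> A" and g: "\<forall>\<omega>\<in>\<Omega>. g \<omega> = (\<Sum>i<n. c i * indicator (E i) \<omega>)"
  shows "simple_integral \<Omega> P g = (\<Sum>i<n. c i * P (E i))"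
proof -
  have "simple_integral \<Omega> P g = (\<Sum>S\<in>Pow {..<n}. \<Sum>i\<in>{i\<in>{..<n}. i \<in> S}. c i * P (atom \<Omega> n E S))"
    unfolding simple_integral_atoms[OF E g] sum_distrib_right
  proof (rule sum.cong[OF refl])
    fix S assume "S \<in> Pow {..<n}"
    then have "{i\<in>{..<n}. i \<in> S} = S" by auto
    then show "(\<Sum>i\<in>S. c i * P (atom \<Omega> n E S)) = (\<Sum>i\<in>{i\<in>{..<n}. i \<in> S}. c i * P (atom \<Omega> n E S))"
      by simp
  qed
  also have "\<dots> = (\<Sum>i<n. c i * (\<Sum>S\<in>{S\<in>Pow {..<n}. i \<in> S}. P (atom \<Omega> n E S)))"
    by (subst sum.swap_restrict) (simp_all add: sum_distrib_left)
  also have "\<dots> = (\<Sum>i<n. c i * P (E i))"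
  proof (intro sum.cong refl)
    fix i assume i: "i \<in> {..<n}"
    have "atom \<Omega> n E ` {S\<in>Pow {..<n}. i \<in> S} \<subseteq> A" using atom_in_field[OF field E] by auto
    moreover have "disjoint_family_on (atom \<Omega> n E) {S\<in>Pow {..<n}. i \<in> S}"
      using disjoint_family_on_atom by (rule disjoint_family_on_mono[rotated]) auto
    moreover have "E i \<subseteq> \<Omega>" using field_on_subset[OF field] E i by auto
    ultimately show "c i * (\<Sum>S\<in>{S\<in>Pow {..<n}. i \<in> S}. P (atom \<Omega> n E S)) = c i * P (E i)"
      using finite_additive[of "{S\<in>Pow {..<n}. i \<in> S}" "atom \<Omega> n E"] UN_atom_containing[of i n E \<Omega>] i
      by simp
  qed
  finally show ?thesis .
qed

lemma simple_integral_indicator: "E \<in> A \<Longrightarrow> simple_integral \<Omega> P (indicator E) = P E"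
  using simple_integral_sum_indicator[of "Suc 0" "\<lambda>_. E" "indicator E" "\<lambda>_. 1"] by simp

lemma simple_integral_const: "simple_integral \<Omega> P (\<lambda>\<omega>. k) = k"
  using simple_integral_sum_indicator[of "Suc 0" "\<lambda>_. \<Omega>" "\<lambda>_. k" "\<lambda>_. k"] field_on_space[OF field] space
  by simp

lemma simple_integral_lin:
  assumes "simple_fn \<Omega> A g" "simple_fn \<Omega> A h"
  shows "simple_integral \<Omega> P (\<lambda>\<omega>. a * g \<omega> + b * h \<omega>)
    = a * simple_integral \<Omega> P g + b * simple_integral \<Omega> P h"
proof -
  obtain n1 c1 E1 where 1: "\<forall>i<(n1::nat). E1 i \<in> A" "\<forall>\<omega>\<in>\<Omega>. g \<omega> = (\<Sum>i<n1. c1 i * indicator (E1 i) \<omega>)"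
    using assms(1) unfolding simple_fn_def by blast
  obtain n2 c2 E2 where 2: "\<forall>i<(n2::nat). E2 i \<in> A" "\<forall>\<omega>\<in>\<Omega>. h \<omega> = (\<Sum>i<n2. c2 i * indicator (E2 i) \<omega>)"
    using assms(2) unfolding simple_fn_def by blast
  obtain c E where cE: "\<forall>i<n1 + n2. E i \<in> A"
    "\<forall>\<omega>\<in>\<Omega>. a * g \<omega> + b * h \<omega> = (\<Sum>i<n1 + n2. c i * indicator (E i) \<omega>)"
    "\<And>Q. (\<Sum>i<n1 + n2. c i * Q (E i)) = a * (\<Sum>i<n1. c1 i * Q (E1 i)) + b * (\<Sum>i<n2. c2 i * Q (E2 i))"
    by (rule sum_indicator_lin_comb[OF 1 2, where a = a and b = b]) blast
  have "simple_integral \<Omega> P (\<lambda>\<omega>. a * g \<omega> + b * h \<omega>) = (\<Sum>i<n1 + n2. c i * P (E i))"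
    by (rule simple_integral_sum_indicator[OF cE(1,2)])
  also have "\<dots> = a * (\<Sum>i<n1. c1 i * P (E1 i)) + b * (\<Sum>i<n2. c2 i * P (E2 i))"
    by (rule cE(3))
  finally show ?thesis
    by (simp only: simple_integral_sum_indicator[OF 1] simple_integral_sum_indicator[OF 2])
qed

lemma simple_integral_nonneg:
  assumes g: "simple_fn \<Omega> A g" and nonneg_g: "\<forall>\<omega>\<in>\<Omega>. 0 \<le> g \<omega>"
  shows "0 \<le> simple_integral \<Omega> P g"
proof -
  obtain n c E where E: "\<forall>i<(n::nat). E i \<in> A" and g_eq: "\<forall>\<omega>\<in>\<Omega>. g \<omega> = (\<Sum>i<n. c i * indicator (E i) \<omega>)"
    using g unfolding simple_fn_def by blast
  have "0 \<le> sum c S * P (atom \<Omega> n E S)" if S: "S \<subseteq> {..<n}" for S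
  proof (cases "atom \<Omega> n E S = {}")
    case False
    then obtain \<omega> where \<omega>: "\<omega> \<in> atom \<Omega> n E S" by blast
    then have "sum c S = g \<omega>" using g_eq sum_indicator_on_atom[OF \<omega> S] by (simp add: atom_def)
    then show ?thesis using nonneg_g \<omega> nonneg[OF atom_in_field[OF field E]] by (simp add: atom_def)
  qed (simp add: empty_zero)
  then show ?thesis unfolding simple_integral_atoms[OF E g_eq] by (intro sum_nonneg) auto
qed

lemma simple_integral_diff:
  assumes g: "simple_fn \<Omega> A g" and h: "simple_fn \<Omega> A h"
  shows "simple_fn \<Omega> A (\<lambda>\<omega>. g \<omega> - h \<omega>)"
    and "simple_integral \<Omega> P (\<lambda>\<omega>. g \<omega> - h \<omega>) = simple_integral \<Omega> P g - simple_integral \<Omega> P h"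
  using simple_fn_lin[OF g h, of 1 "-1"] simple_integral_lin[OF g h, of 1 "-1"] by simp_all

lemma simple_integral_mono:
  assumes g: "simple_fn \<Omega> A g" and h: "simple_fn \<Omega> A h" and gh: "\<forall>\<omega>\<in>\<Omega>. g \<omega> \<le> h \<omega>"
  shows "simple_integral \<Omega> P g \<le> simple_integral \<Omega> P h"
  using simple_integral_nonneg[OF simple_integral_diff(1)[OF h g]] gh simple_integral_diff(2)[OF h g]
  by simp

lemma simple_integral_abs_diff_le:
  assumes g: "simple_fn \<Omega> A g" and h: "simple_fn \<Omega> A h" and gh: "\<forall>\<omega>\<in>\<Omega>. \<bar>g \<omega> - h \<omega>\<bar> \<le> e"
  shows "\<bar>simple_integral \<Omega> P g - simple_integral \<Omega> P h\<bar> \<le> e"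
proof -
  note d = simple_integral_diff[OF g h]
  have "simple_integral \<Omega> P (\<lambda>\<omega>. g \<omega> - h \<omega>) \<le> simple_integral \<Omega> P (\<lambda>\<omega>. e)"
    using gh by (intro simple_integral_mono d(1) simple_fn_const field) auto
  moreover have "simple_integral \<Omega> P (\<lambda>\<omega>. - e) \<le> simple_integral \<Omega> P (\<lambda>\<omega>. g \<omega> - h \<omega>)"
    using gh by (intro simple_integral_mono d(1) simple_fn_const field) (auto simp: abs_le_iff)
  ultimately show ?thesis using d(2) by (simp add: simple_integral_const abs_le_iff)
qed

lemma charge_integral_approx:
  assumes f: "in_B \<Omega> A f" and g: "simple_fn \<Omega> A g" and fg: "\<forall>\<omega>\<in>\<Omega>. \<bar>f \<omega> - g \<omega>\<bar> \<le> e"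
  shows "\<bar>charge_integral \<Omega> A P f - simple_integral \<Omega> P g\<bar> \<le> e"
proof -
  define S where "S = {simple_integral \<Omega> P g - e | g e. simple_fn \<Omega> A g \<and> (\<forall>\<omega>\<in>\<Omega>. \<bar>f \<omega> - g \<omega>\<bar> \<le> e)}"
  have below: "x \<le> simple_integral \<Omega> P g + e"
    if "x \<in> S" "simple_fn \<Omega> A g" "\<forall>\<omega>\<in>\<Omega>. \<bar>f \<omega> - g \<omega>\<bar> \<le> e" for x g e
  proof -
    obtain g' e' where x: "x = simple_integral \<Omega> P g' - e'"
      and g': "simple_fn \<Omega> A g'" "\<forall>\<omega>\<in>\<Omega>. \<bar>f \<omega> - g' \<omega>\<bar> \<le> e'"
      using \<open>x \<in> S\<close> unfolding S_def by blast
    have "\<forall>\<omega>\<in>\<Omega>. \<bar>g' \<omega> - g \<omega>\<bar> \<le> e' + e" using g'(2) that(3) by (fastforce simp: abs_le_iff)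
    then have "\<bar>simple_integral \<Omega> P g' - simple_integral \<Omega> P g\<bar> \<le> e' + e"
      by (rule simple_integral_abs_diff_le[OF g'(1) that(2)])
    then show ?thesis unfolding x by (simp add: abs_le_iff)
  qed
  obtain g0 where g0: "simple_fn \<Omega> A g0" "\<forall>\<omega>\<in>\<Omega>. \<bar>f \<omega> - g0 \<omega>\<bar> \<le> 1"
    using f unfolding in_B_def by (meson zero_less_one)
  then have "S \<noteq> {}" unfolding S_def by blast
  moreover have "bdd_above S" using below[OF _ g0] by (intro bdd_aboveI) blast
  ultimately have Sup_approx: "\<bar>Sup S - simple_integral \<Omega> P g\<bar> \<le> e"
    if "simple_fn \<Omega> A g" "\<forall>\<omega>\<in>\<Omega>. \<bar>f \<omega> - g \<omega>\<bar> \<le> e" for g e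
  proof -
    have "simple_integral \<Omega> P g - e \<in> S" unfolding S_def using that by blast
    then have "simple_integral \<Omega> P g - e \<le> Sup S" using \<open>bdd_above S\<close> by (rule cSup_upper)
    moreover have "Sup S \<le> simple_integral \<Omega> P g + e" using \<open>S \<noteq> {}\<close> below that by (intro cSup_least) auto
    ultimately show ?thesis by (simp add: abs_le_iff)
  qed
  have "charge_integral \<Omega> A P f = Sup S"
    unfolding charge_integral_def
  proof (rule the_equality)
    show "\<forall>e>0. \<exists>g. simple_fn \<Omega> A g \<and> (\<forall>\<omega>\<in>\<Omega>. \<bar>f \<omega> - g \<omega>\<bar> \<le> e) \<and> \<bar>Sup S - simple_integral \<Omega> P g\<bar> \<le> e"
      using f Sup_approx unfolding in_B_def by blast
  next
    fix r assume r: "\<forall>e>0. \<exists>g. simple_fn \<Omega> A g \<and> (\<forall>\<omega>\<in>\<Omega>. \<bar>f \<omega> - g \<omega>\<bar> \<le> e) \<and> \<bar>r - simple_integral \<Omega> P g\<bar> \<le> e"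
    show "r = Sup S"
    proof (rule eq_if_abs_diff_le_mult_epsilon[of 2])
      fix d :: real assume "0 < d"
      then obtain g where "simple_fn \<Omega> A g" "\<forall>\<omega>\<in>\<Omega>. \<bar>f \<omega> - g \<omega>\<bar> \<le> d" "\<bar>r - simple_integral \<Omega> P g\<bar> \<le> d"
        using r by blast
      then show "\<bar>r - Sup S\<bar> \<le> 2 * d" using Sup_approx by (fastforce simp: abs_le_iff)
    qed simp
  qed
  then show ?thesis using Sup_approx[OF g fg] by simp
qed

lemma charge_integral_simple: "simple_fn \<Omega> A g \<Longrightarrow> charge_integral \<Omega> A P g = simple_integral \<Omega> P g"
  using charge_integral_approx[OF in_B_simple, of g g 0] by simp

lemma charge_integral_indicator: "E \<in> A \<Longrightarrow> charge_integral \<Omega> A P (indicator E) = P E"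
  by (simp add: charge_integral_simple simple_fn_indicator simple_integral_indicator)

lemma charge_integral_cong:
  "(\<And>\<omega>. \<omega> \<in> \<Omega> \<Longrightarrow> f \<omega> = g \<omega>) \<Longrightarrow> charge_integral \<Omega> A P f = charge_integral \<Omega> A P g"
  unfolding charge_integral_def by simp

lemma charge_integral_lin:
  assumes f1: "in_B \<Omega> A f1" and f2: "in_B \<Omega> A f2"
  shows "charge_integral \<Omega> A P (\<lambda>\<omega>. a * f1 \<omega> + b * f2 \<omega>)
    = a * charge_integral \<Omega> A P f1 + b * charge_integral \<Omega> A P f2"
proof (rule eq_if_abs_diff_le_mult_epsilon[of "2 * (\<bar>a\<bar> + \<bar>b\<bar>)"])
  fix d :: real assume "0 < d"
  then obtain g1 g2 where g: "simple_fn \<Omega> A g1" "\<forall>\<omega>\<in>\<Omega>. \<bar>f1 \<omega> - g1 \<omega>\<bar> \<le> d"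
    "simple_fn \<Omega> A g2" "\<forall>\<omega>\<in>\<Omega>. \<bar>f2 \<omega> - g2 \<omega>\<bar> \<le> d"
    using f1 f2 unfolding in_B_def by meson
  let ?I = "charge_integral \<Omega> A P" and ?S = "simple_integral \<Omega> P"
  have "\<bar>(a * f1 \<omega> + b * f2 \<omega>) - (a * g1 \<omega> + b * g2 \<omega>)\<bar> \<le> (\<bar>a\<bar> + \<bar>b\<bar>) * d" if "\<omega> \<in> \<Omega>" for \<omega>
    using abs_lin_comb_le[of "f1 \<omega> - g1 \<omega>" d "f2 \<omega> - g2 \<omega>" a b] g(2,4) that
    by (simp add: algebra_simps)
  then have "\<bar>?I (\<lambda>\<omega>. a * f1 \<omega> + b * f2 \<omega>) - (a * ?S g1 + b * ?S g2)\<bar> \<le> (\<bar>a\<bar> + \<bar>b\<bar>) * d"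
    using charge_integral_approx[OF in_B_lin[OF f1 f2] simple_fn_lin[OF g(1,3)]]
    by (simp add: simple_integral_lin[OF g(1,3)] del: abs_le_iff)
  moreover have "\<bar>(a * ?S g1 + b * ?S g2) - (a * ?I f1 + b * ?I f2)\<bar> \<le> (\<bar>a\<bar> + \<bar>b\<bar>) * d"
  proof -
    have "\<bar>?S g1 - ?I f1\<bar> \<le> d" "\<bar>?S g2 - ?I f2\<bar> \<le> d"
      using charge_integral_approx[OF f1 g(1,2)] charge_integral_approx[OF f2 g(3,4)]
      by (simp_all add: abs_minus_commute)
    from abs_lin_comb_le[OF this, of a b] show ?thesis by (simp add: algebra_simps)
  qed
  ultimately show "\<bar>?I (\<lambda>\<omega>. a * f1 \<omega> + b * f2 \<omega>) - (a * ?I f1 + b * ?I f2)\<bar> \<le> 2 * (\<bar>a\<bar> + \<bar>b\<bar>) * d"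
    by linarith
qed simp

lemma charge_integral_uminus:
  "in_B \<Omega> A f \<Longrightarrow> charge_integral \<Omega> A P (\<lambda>\<omega>. - f \<omega>) = - charge_integral \<Omega> A P f"
  using charge_integral_lin[of f f "-1" 0] by simp

lemma charge_integral_sum:
  fixes n :: nat
  assumes "\<forall>i<n. in_B \<Omega> A (f i)"
  shows "charge_integral \<Omega> A P (\<lambda>\<omega>. \<Sum>i<n. c i * f i \<omega>) = (\<Sum>i<n. c i * charge_integral \<Omega> A P (f i))"
  using assms
proof (induction n)
  case 0
  then show ?case using charge_integral_simple[OF simple_fn_const[OF field, of 0]] simple_integral_const by simp
next
  case (Suc n)
  then show ?case
    using charge_integral_lin[OF in_B_sum[of n \<Omega> A f c], of "f n" 1 "c n"] by simp
qed

lemma charge_integral_ge: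
  assumes f: "in_B \<Omega> A f" and ge: "\<forall>\<omega>\<in>\<Omega>. k \<le> f \<omega>"
  shows "k \<le> charge_integral \<Omega> A P f"
proof (rule field_le_epsilon)
  fix e :: real assume "0 < e"
  then obtain g where g: "simple_fn \<Omega> A g" "\<forall>\<omega>\<in>\<Omega>. \<bar>f \<omega> - g \<omega>\<bar> \<le> e / 2"
    using f unfolding in_B_def by (meson half_gt_zero)
  have g_ge: "k - e / 2 \<le> g \<omega>" if "\<omega> \<in> \<Omega>" for \<omega>
  proof -
    have "\<bar>f \<omega> - g \<omega>\<bar> \<le> e / 2" "k \<le> f \<omega>" using g(2) ge that by auto
    then show ?thesis unfolding abs_le_iff by linarith
  qed
  have "simple_integral \<Omega> P (\<lambda>\<omega>. k - e / 2) \<le> simple_integral \<Omega> P g"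
    using g_ge by (intro simple_integral_mono simple_fn_const field g(1)) auto
  then have "k - e / 2 \<le> simple_integral \<Omega> P g" by (simp add: simple_integral_const)
  moreover have "\<bar>charge_integral \<Omega> A P f - simple_integral \<Omega> P g\<bar> \<le> e / 2"
    by (rule charge_integral_approx[OF f g])
  ultimately show "k \<le> charge_integral \<Omega> A P f + e" unfolding abs_le_iff by linarith
qed

end

subsection \<open>Type spaces\<close>

locale tspace =
  fixes \<Omega> :: "'a set" and A M :: "'a set set" and t :: "'a \<Rightarrow> 'a set \<Rightarrow> real"
  assumes type_space: "type_space \<Omega> A M t"
begin

lemma field_A: "field_on \<Omega> A"
  using type_space unfolding type_space_def by auto

lemma field_M: "field_on \<Omega> M"
  using type_space unfolding type_space_def by auto

lemma M_subset_A: "M \<subseteq> A"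
  using type_space unfolding type_space_def by auto

lemma in_B_t: "E \<in> A \<Longrightarrow> in_B \<Omega> M (\<lambda>\<omega>. t \<omega> E)"
  using type_space unfolding type_space_def by auto

lemma t_mem_eq_1: "F \<in> M \<Longrightarrow> \<omega> \<in> F \<Longrightarrow> t \<omega> F = 1"
  using type_space unfolding type_space_def by blast

lemma charge_t: "\<omega> \<in> \<Omega> \<Longrightarrow> charge \<Omega> A (t \<omega>)"
  using type_space field_A unfolding type_space_def by (blast intro: charge.intro)

lemma t_eq_indicator:
  assumes F: "F \<in> M" and \<omega>: "\<omega> \<in> \<Omega>"
  shows "t \<omega> F = indicator F \<omega>"
proof -
  interpret t\<omega>: charge \<Omega> A "t \<omega>" by (rule charge_t[OF \<omega>])
  have F_compl: "\<Omega> - F \<in> M" by (rule field_on_compl[OF field_M F])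
  have "F \<union> (\<Omega> - F) = \<Omega>" using field_on_subset[OF field_M F] by auto
  moreover have "t \<omega> (F \<union> (\<Omega> - F)) = t \<omega> F + t \<omega> (\<Omega> - F)"
    by (rule t\<omega>.additive) (use F F_compl M_subset_A in auto)
  ultimately have "t \<omega> F + t \<omega> (\<Omega> - F) = 1" using t\<omega>.space by simp
  moreover have "t \<omega> F = 1" if "\<omega> \<in> F" using t_mem_eq_1[OF F that] .
  moreover have "t \<omega> (\<Omega> - F) = 1" if "\<omega> \<notin> F" using t_mem_eq_1[OF F_compl] that \<omega> by blast
  ultimately show ?thesis by (auto simp: indicator_def)
qed

lemma t_Int:
  assumes E: "E \<in> A" and F: "F \<in> M" and \<omega>: "\<omega> \<in> \<Omega>"
  shows "t \<omega> (E \<inter> F) = indicator F \<omega> * t \<omega> E"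
proof -
  interpret t\<omega>: charge \<Omega> A "t \<omega>" by (rule charge_t[OF \<omega>])
  have FA: "F \<in> A" "\<Omega> - F \<in> A" using F field_on_compl[OF field_M F] M_subset_A by auto
  have EF: "E \<inter> F \<in> A" "E - F \<in> A" using field_on_Int[OF field_A E FA(1)] field_on_Diff[OF field_A E FA(1)] .
  show ?thesis
  proof (cases "\<omega> \<in> F")
    case True
    have "t \<omega> (E - F) \<le> t \<omega> (\<Omega> - F)" using t\<omega>.mono[OF EF(2) FA(2)] field_on_subset[OF field_A E] by auto
    moreover have "t \<omega> (\<Omega> - F) = 0" using t_eq_indicator[OF field_on_compl[OF field_M F] \<omega>] True by simp
    moreover have "t \<omega> E = t \<omega> (E \<inter> F) + t \<omega> (E - F)"
      using t\<omega>.additive[OF EF] by (simp add: Int_Diff_Un Int_Diff_disjoint)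
    ultimately show ?thesis using t\<omega>.nonneg[OF EF(2)] True by simp
  next
    case False
    have "t \<omega> (E \<inter> F) \<le> t \<omega> F" using t\<omega>.mono[OF EF(1) FA(1)] by auto
    then show ?thesis using t_eq_indicator[OF F \<omega>] t\<omega>.nonneg[OF EF(1)] False by simp
  qed
qed

lemma charge_integral_t_eq_value:
  assumes h: "in_B \<Omega> M h" and \<omega>: "\<omega> \<in> \<Omega>"
  shows "charge_integral \<Omega> A (t \<omega>) h = h \<omega>"
proof (rule eq_if_abs_diff_le_mult_epsilon[of 2])
  interpret t\<omega>: charge \<Omega> A "t \<omega>" by (rule charge_t[OF \<omega>])
  fix d :: real assume "0 < d"
  then obtain s where s: "simple_fn \<Omega> M s" "\<forall>\<omega>\<in>\<Omega>. \<bar>h \<omega> - s \<omega>\<bar> \<le> d"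
    using h unfolding in_B_def by blast
  obtain n c F where F: "\<forall>i<(n::nat). F i \<in> M" "\<forall>\<omega>\<in>\<Omega>. s \<omega> = (\<Sum>i<n. c i * indicator (F i) \<omega>)"
    using s(1) unfolding simple_fn_def by blast
  have "simple_integral \<Omega> (t \<omega>) s = (\<Sum>i<n. c i * t \<omega> (F i))"
    using F M_subset_A by (intro t\<omega>.simple_integral_sum_indicator) auto
  also have "\<dots> = s \<omega>" using F t_eq_indicator \<omega> by simp
  finally have "simple_integral \<Omega> (t \<omega>) s = s \<omega>" .
  moreover have "\<bar>charge_integral \<Omega> A (t \<omega>) h - simple_integral \<Omega> (t \<omega>) s\<bar> \<le> d"
    using t\<omega>.charge_integral_approx[OF in_B_mono[OF h M_subset_A] simple_fn_mono[OF s(1) M_subset_A] s(2)] .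
  ultimately show "\<bar>charge_integral \<Omega> A (t \<omega>) h - h \<omega>\<bar> \<le> 2 * d" using s(2) \<omega> by (fastforce simp: abs_le_iff)
qed simp

lemma charge_integral_t_if_disintegrable:
  assumes P: "charge \<Omega> A P" and dis: "disintegrable \<Omega> A M t P" and E: "E \<in> A"
  shows "charge_integral \<Omega> A P (\<lambda>\<omega>. t \<omega> E) = P E"
proof -
  have "P (E \<inter> \<Omega>) = charge_integral \<Omega> A P (\<lambda>\<omega>. indicator \<Omega> \<omega> * t \<omega> E)"
    using dis E field_on_space[OF field_M] unfolding disintegrable_def by blast
  moreover have "E \<inter> \<Omega> = E" using field_on_subset[OF field_A E] by blast
  moreover have "charge_integral \<Omega> A P (\<lambda>\<omega>. indicator \<Omega> \<omega> * t \<omega> E) = charge_integral \<Omega> A P (\<lambda>\<omega>. t \<omega> E)"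
    by (rule charge.charge_integral_cong[OF P]) simp
  ultimately show ?thesis by simp
qed

lemma charge_integral_nonneg_if_disintegrable:
  assumes P: "charge \<Omega> A P" and dis: "disintegrable \<Omega> A M t P"
    and f: "in_B \<Omega> A f" and f_t: "\<forall>\<omega>\<in>\<Omega>. 0 \<le> charge_integral \<Omega> A (t \<omega>) f"
  shows "0 \<le> charge_integral \<Omega> A P f"
proof (rule field_le_epsilon)
  interpret P: charge \<Omega> A P by (rule P)
  fix e :: real assume "0 < e"
  then obtain g where g: "simple_fn \<Omega> A g" "\<forall>\<omega>\<in>\<Omega>. \<bar>f \<omega> - g \<omega>\<bar> \<le> e / 2"
    using f unfolding in_B_def by (meson half_gt_zero)
  obtain n c E where E: "\<forall>i<(n::nat). E i \<in> A" "\<forall>\<omega>\<in>\<Omega>. g \<omega> = (\<Sum>i<n. c i * indicator (E i) \<omega>)"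
    using g(1) unfolding simple_fn_def by blast
  define h where "h \<omega> = (\<Sum>i<n. c i * t \<omega> (E i))" for \<omega>
  have h_B: "\<forall>i<n. in_B \<Omega> A (\<lambda>\<omega>. t \<omega> (E i))" using E(1) in_B_t in_B_mono M_subset_A by blast
  have "charge_integral \<Omega> A P h = (\<Sum>i<n. c i * P (E i))"
    unfolding h_def using P.charge_integral_sum[OF h_B] charge_integral_t_if_disintegrable[OF P dis] E(1)
    by simp
  also have "\<dots> = simple_integral \<Omega> P g" using P.simple_integral_sum_indicator[OF E] ..
  finally have "charge_integral \<Omega> A P h = simple_integral \<Omega> P g" .
  moreover have "- (e / 2) \<le> h \<omega>" if \<omega>: "\<omega> \<in> \<Omega>" for \<omega>
  proof -
    have "\<bar>charge_integral \<Omega> A (t \<omega>) f - h \<omega>\<bar> \<le> e / 2"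
      using charge.charge_integral_approx[OF charge_t[OF \<omega>] f g]
        charge.simple_integral_sum_indicator[OF charge_t[OF \<omega>] E]
      by (simp add: h_def)
    moreover have "0 \<le> charge_integral \<Omega> A (t \<omega>) f" using f_t \<omega> by blast
    ultimately show ?thesis unfolding abs_le_iff by linarith
  qed
  then have "- (e / 2) \<le> charge_integral \<Omega> A P h"
    using in_B_sum[OF h_B] unfolding h_def[abs_def] by (intro P.charge_integral_ge ballI)
  moreover have "\<bar>charge_integral \<Omega> A P f - simple_integral \<Omega> P g\<bar> \<le> e / 2"
    by (rule P.charge_integral_approx[OF f g])
  ultimately show "0 \<le> charge_integral \<Omega> A P f + e" unfolding abs_le_iff by linarith
qed

lemma not_money_pump_if_disintegrable:
  assumes P: "charge \<Omega> A P" and dis: "disintegrable \<Omega> A M t P"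
  shows "\<not> money_pump \<Omega> A t P"
  using charge_integral_nonneg_if_disintegrable[OF P dis] unfolding money_pump_def by (meson not_le)

lemma charge_integral_eq_0_if_not_money_pump:
  assumes P: "charge \<Omega> A P" and no_pump: "\<not> money_pump \<Omega> A t P"
    and f: "in_B \<Omega> A f" and f_t: "\<forall>\<omega>\<in>\<Omega>. charge_integral \<Omega> A (t \<omega>) f = 0"
  shows "charge_integral \<Omega> A P f = 0"
proof -
  have nonneg: "0 \<le> charge_integral \<Omega> A P g"
    if "in_B \<Omega> A g" "\<forall>\<omega>\<in>\<Omega>. 0 \<le> charge_integral \<Omega> A (t \<omega>) g" for g
    using no_pump that unfolding money_pump_def by (meson not_le)
  have "0 \<le> charge_integral \<Omega> A P f" using nonneg[OF f] f_t by simp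
  moreover have "0 \<le> charge_integral \<Omega> A P (\<lambda>\<omega>. - f \<omega>)"
    using nonneg[OF in_B_uminus[OF f]] f_t charge.charge_integral_uminus[OF charge_t f] by simp
  ultimately show ?thesis using charge.charge_integral_uminus[OF P f] by simp
qed

lemma disintegrable_if_not_money_pump:
  assumes P: "charge \<Omega> A P" and no_pump: "\<not> money_pump \<Omega> A t P"
  shows "disintegrable \<Omega> A M t P"
  unfolding disintegrable_def
proof (intro ballI)
  fix E F assume E: "E \<in> A" and F: "F \<in> M"
  define u where "u \<omega> = indicator F \<omega> * t \<omega> E" for \<omega>
  have EF: "E \<inter> F \<in> A" using field_on_Int[OF field_A E] F M_subset_A by auto
  have u_M: "in_B \<Omega> M u" unfolding u_def by (rule in_B_indicator_mult[OF field_M F in_B_t[OF E]])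
  have EF_B: "in_B \<Omega> A (indicator (E \<inter> F))" by (rule in_B_simple[OF simple_fn_indicator[OF EF]])
  have u_B: "in_B \<Omega> A u" by (rule in_B_mono[OF u_M M_subset_A])
  have f_B: "in_B \<Omega> A (\<lambda>\<omega>. indicator (E \<inter> F) \<omega> - u \<omega>)"
    using in_B_lin[OF EF_B u_B, of 1 "-1"] by simp
  have integral_f: "charge_integral \<Omega> A Q (\<lambda>\<omega>. indicator (E \<inter> F) \<omega> - u \<omega>) = Q (E \<inter> F) - charge_integral \<Omega> A Q u"
    if "charge \<Omega> A Q" for Q
    using charge.charge_integral_lin[OF that EF_B u_B, of 1 "-1"] charge.charge_integral_indicator[OF that EF]
    by simp
  have "charge_integral \<Omega> A (t \<omega>) (\<lambda>\<omega>. indicator (E \<inter> F) \<omega> - u \<omega>) = 0" if \<omega>: "\<omega> \<in> \<Omega>" for \<omega>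
    using integral_f[OF charge_t[OF \<omega>]] charge_integral_t_eq_value[OF u_M \<omega>] t_Int[OF E F \<omega>]
    by (simp add: u_def)
  then have "charge_integral \<Omega> A P (\<lambda>\<omega>. indicator (E \<inter> F) \<omega> - u \<omega>) = 0"
    using charge_integral_eq_0_if_not_money_pump[OF P no_pump f_B] by blast
  then show "P (E \<inter> F) = charge_integral \<Omega> A P (\<lambda>\<omega>. indicator F \<omega> * t \<omega> E)"
    using integral_f[OF P] unfolding u_def[abs_def] by simp
qed

end

theorem theorem1:
  fixes \<Omega> :: "'a set" and A M :: "'a set set" and t :: "'a \<Rightarrow> 'a set \<Rightarrow> real"
    and P :: "'a set \<Rightarrow> real"
  assumes "type_space \<Omega> A M t"
    and "pba \<Omega> A P"
  shows "disintegrable \<Omega> A M t P \<longleftrightarrow> \<not> money_pump \<Omega> A t P"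
proof -
  interpret tspace \<Omega> A M t by (rule tspace.intro) fact
  have P: "charge \<Omega> A P" using field_A assms(2) by (rule charge.intro)
  show ?thesis using not_money_pump_if_disintegrable[OF P] disintegrable_if_not_money_pump[OF P] by blast
qed

end
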